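(* Let $a=(a_1<\dots<a_n)$ be the sequence of a matching of size $n$ and $d(a)=\sum_i(a_i-i)$. For an indeterminate $t$, let $\Phi_a(\tau,t)$ be the coefficient of $\prod_{i=1}^n u_i^{a_i-1}$ in the formal power series $$\prod_{i=1}^n(1+\tau u_i)^t\prod_{1\le i<j\le n}(u_j-u_i)(1+\tau u_j+u_iu_j),$$ where $(1+\tau u)^t=\sum_{k\ge0}\binom{t}{k}\tau^ku^k$. Then $\Phi_a(\tau,t)$ is a polynomial in $\tau$ with coefficients in $\mathbb{Q}[t]$, of degree $d(a)$ in $\tau$, whose coefficient of $\tau^{d(a)}$ is $$D_a(t)=\det_{1\le i,j\le n}\left[\binom{t+i-1}{a_i-j}\right].$$
   Context: A matching of size $n$ is a set of $n$ disjoint noncrossing pairs partitioning $\{1,\dots,2n\}$; its sequence $a_1<\dots<a_n$ lists the smaller elements of its arches (so $a_i\le 2i-1$). $\binom{x}{k}=x(x-1)\cdots(x-k+1)/k!$ for $k\ge0$ and $0$ for $k<0$. *)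

theory Defs
  imports "HOL-Library.Poly_Mapping" "HOL-Computational_Algebra.Polynomial"
    "Jordan_Normal_Form.Determinant"
begin

definition noncrossing_matching :: "nat \<Rightarrow> (nat \<times> nat) set \<Rightarrow> bool" where
  "noncrossing_matching n M \<longleftrightarrow>
     (\<forall>p\<in>M. fst p < snd p \<and> fst p \<in> {1..2*n} \<and> snd p \<in> {1..2*n}) \<and>
     (\<forall>x\<in>{1..2*n}. \<exists>!p. p \<in> M \<and> (x = fst p \<or> x = snd p)) \<and>
     \<not> (\<exists>p\<in>M. \<exists>q\<in>M. fst p < fst q \<and> fst q < snd p \<and> snd p < snd q)"

(* the sequence a_1 < ... < a_n of smaller elements; a_(i+1) = matching_seq M ! i *)
definition matching_seq :: "(nat \<times> nat) set \<Rightarrow> nat list" where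
  "matching_seq M = sorted_list_of_set (fst ` M)"

definition pbinom :: "rat poly \<Rightarrow> nat \<Rightarrow> rat poly" where
  "pbinom p k = smult (1 / fact k) (\<Prod>m<k. p - [:of_nat m:])"

definition tbinom :: "nat \<Rightarrow> int \<Rightarrow> rat poly" where
  "tbinom s k = (if k < 0 then 0 else pbinom [:of_nat s, 1:] (nat k))"

(* the indeterminate t and tau: Phi lives in (Q[t])[tau] = rat poly poly *)
definition tau :: "rat poly poly" where "tau = [:0, 1:]"

(* multivariate polynomials in u_0, u_1, ... with coefficients in Q[t][tau] *)
type_synonym upoly = "(nat \<Rightarrow>\<^sub>0 nat) \<Rightarrow>\<^sub>0 rat poly poly"

definition uvar :: "nat \<Rightarrow> upoly" where
  "uvar i = Poly_Mapping.single (Poly_Mapping.single i 1) 1"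

definition uconst :: "rat poly poly \<Rightarrow> upoly" where
  "uconst c = Poly_Mapping.single 0 c"

definition Qpoly :: "nat \<Rightarrow> upoly" where
  "Qpoly n = (\<Prod>(i,j)\<in>{(i,j). i < j \<and> j < n}.
      (uvar j - uvar i) * (1 + uconst tau * uvar j + uvar i * uvar j))"

(* coefficient of u^m in the series (1 + tau u)^t, i.e. binom(t,m) tau^m *)
definition ser_coeff :: "nat \<Rightarrow> rat poly poly" where
  "ser_coeff m = [:pbinom [:0, 1:] m:] * tau ^ m"

(* Phi_a(tau,t): coefficient of prod_i u_i^(a_i - 1) in
   prod_i (1+tau u_i)^t * Qpoly n, computed as the (finite) Cauchy product:
   sum over monomials u^e of Qpoly with coefficient q_e, times the coefficient
   of u_i^(a_i-1-e_i) in (1+tau u_i)^t (zero if e_i > a_i - 1), with e_i = 0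
   required for i >= n (target exponent 0). *)
definition Phi :: "nat list \<Rightarrow> rat poly poly" where
  "Phi a = (let n = length a in
     \<Sum>e\<in>Poly_Mapping.keys (Qpoly n).
        (if (\<forall>i\<ge>n. Poly_Mapping.lookup e i = 0) then
           Poly_Mapping.lookup (Qpoly n) e *
           (\<Prod>i<n. if Poly_Mapping.lookup e i \<le> a ! i - 1
                     then ser_coeff (a ! i - 1 - Poly_Mapping.lookup e i) else 0)
         else 0))"

definition dstat :: "nat list \<Rightarrow> nat" where
  "dstat a = (\<Sum>i<length a. a ! i - (i + 1))"

(* D_a(t) = det [binom(t+i-1, a_i - j)]_{1<=i,j<=n}; 0-based: binom(t+i, a!i - j - 1) *)
definition Dmat :: "nat list \<Rightarrow> rat poly mat" where
  "Dmat a = mat (length a) (length a)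
     (\<lambda>(i,j). tbinom i (int (a ! i) - int j - 1))"

end

theory Submission
  imports Defs "HOL-Computational_Algebra.Formal_Power_Series"
begin

(* Let a = (a_1 < ... < a_n), b_i = a_i - 1 and d = d(a).
   Each factor (u_j - u_i)(1 + tau u_j + u_i u_j) of the polynomial part of the
   series has six monomials, so the polynomial part is a sum over "choices" g (one
   monomial per factor) of signed monomials.  Extracting the coefficient of
   prod u_i^(b_i) is a linear functional, so Phi(a) is a sum with one summand per
   choice, and a count of tau-exponents shows that the summand of g is a constant
   times tau^(d - 2 q(g)), where q(g) is the number of factors from which u_i u_j
   was taken.  Hence deg Phi(a) <= d, and the coefficient of tau^d collects the
   choices with q(g) = 0; it is the same kind of extraction applied to
   prod (u_j - u_i)(1 + u_j) = Vandermonde(u) * prod (1 + u_i)^i.  Expanding the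
   Vandermonde determinant over permutations and using the Vandermonde convolution
   sum_k binom(i,k) binom(t,L-k) = binom(t+i,L) turns it into det D_a(t).
   Finally D_a(t) <> 0: its coefficient of t^d is det [1/(b_i - j)!], which is
   prod_i 1/b_i! times a Vandermonde determinant in the distinct numbers b_i. *)


section \<open>Determinant identities\<close>

lemma det_mat_leibniz:
  fixes f :: "nat \<Rightarrow> nat \<Rightarrow> 'a::comm_ring_1"
  shows "det (mat n n (\<lambda>(i,j). f i j))
       = (\<Sum>\<sigma>\<in>{\<sigma>. \<sigma> permutes {..<n}}. signof \<sigma> * (\<Prod>i<n. f i (\<sigma> i)))"
  by (subst det_def'[of _ n])
     (auto simp: atLeast0LessThan permutes_in_image intro!: sum.cong prod.cong)

lemma det_scale_rows:
  fixes c :: "nat \<Rightarrow> 'a::comm_ring_1"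
  shows "det (mat n n (\<lambda>(i,j). c i * f i j)) = (\<Prod>i<n. c i) * det (mat n n (\<lambda>(i,j). f i j))"
  by (simp add: det_mat_leibniz prod.distrib sum_distrib_left ac_simps)

lemma det_upper_unitriangular:
  fixes f :: "nat \<Rightarrow> nat \<Rightarrow> 'a::comm_ring_1"
  assumes "\<And>i j. j < i \<Longrightarrow> i < n \<Longrightarrow> f i j = 0" and "\<And>i. i < n \<Longrightarrow> f i i = 1"
  shows "det (mat n n (\<lambda>(i,j). f i j)) = 1"
proof -
  have "upper_triangular (mat n n (\<lambda>(i,j). f i j))"
    using assms(1) by (auto simp: upper_triangular_def)
  then have "det (mat n n (\<lambda>(i,j). f i j)) = prod_list (diag_mat (mat n n (\<lambda>(i,j). f i j)))"
    by (rule det_upper_triangular) auto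
  also have "\<dots> = 1" unfolding prod_list_diag_prod by (simp add: assms(2))
  finally show ?thesis .
qed

(* Column operations C_j := C_j - x_0 C_(j-1) (an
   upper unitriangular factor) clear the first row; Laplace expansion and row
   scaling reduce to the Vandermonde determinant of x_1, ..., x_n. *)
lemma vandermonde_det:
  fixes x :: "nat \<Rightarrow> 'a::comm_ring_1"
  shows "det (mat n n (\<lambda>(i,j). x i ^ j)) = (\<Prod>j<n. \<Prod>i<j. (x j - x i))"
proof (induction n arbitrary: x)
  case 0
  then show ?case by (simp add: det_dim_zero)
next
  case (Suc n)
  define A where "A = mat (Suc n) (Suc n) (\<lambda>(i,j). x i ^ j)"
  define E :: "'a mat" where
    "E = mat (Suc n) (Suc n) (\<lambda>(k,j). if k = j then 1 else if Suc k = j then - x 0 else 0)"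
  have A: "A \<in> carrier_mat (Suc n) (Suc n)" and E: "E \<in> carrier_mat (Suc n) (Suc n)"
    unfolding A_def E_def by auto
  have detE: "det E = 1" unfolding E_def by (rule det_upper_unitriangular) auto
  define B where "B = A * E"
  have B: "B \<in> carrier_mat (Suc n) (Suc n)" unfolding B_def using A E by auto
  have B_entry: "B $$ (i,j) = (if j = 0 then 1 else (x i - x 0) * x i ^ (j - 1))"
    if "i < Suc n" "j < Suc n" for i j
  proof -
    have "B $$ (i,j) = (\<Sum>k\<in>{0..<Suc n}. x i ^ k * E $$ (k,j))"
      using that A E unfolding B_def by (simp add: scalar_prod_def A_def)
    also have "\<dots> = (\<Sum>k\<in>{0..<Suc n}. (if k = j then x i ^ k else 0)
                                     + (if Suc k = j then - x 0 * x i ^ k else 0))"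
      by (intro sum.cong refl) (auto simp: E_def that)
    also have "\<dots> = (if j = 0 then 1 else (x i - x 0) * x i ^ (j - 1))"
    proof (cases j)
      case 0 then show ?thesis using that by (simp add: sum.distrib)
    next
      case (Suc j')
      have "(\<Sum>k\<in>{0..<Suc n}. (if Suc k = j then - x 0 * x i ^ k else 0)) = - x 0 * x i ^ j'"
        using that Suc by (simp add: sum.delta)
      then show ?thesis using that Suc
        by (simp add: sum.distrib algebra_simps) (metis Suc_lessI power_Suc)
    qed
    finally show ?thesis .
  qed
  have "det A = det B" unfolding B_def using det_mult[OF A E] detE by simp
  also have "det B = (\<Sum>j<Suc n. B $$ (0,j) * cofactor B 0 j)"
    by (rule laplace_expansion_row[OF B]) simp
  also have "\<dots> = (\<Sum>j<Suc n. if j = 0 then cofactor B 0 0 else 0)"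
    by (intro sum.cong refl) (auto simp: B_entry)
  also have "\<dots> = det (mat_delete B 0 0)" by (simp add: cofactor_def)
  also have "mat_delete B 0 0 = mat n n (\<lambda>(i,j). (x (Suc i) - x 0) * (x \<circ> Suc) i ^ j)"
    using B by (auto simp: mat_delete_def B_entry)
  also have "det \<dots> = (\<Prod>i<n. x (Suc i) - x 0) * det (mat n n (\<lambda>(i,j). (x \<circ> Suc) i ^ j))"
    by (rule det_scale_rows)
  also have "\<dots> = (\<Prod>i<n. x (Suc i) - x 0) * (\<Prod>j<n. \<Prod>i<j. (x (Suc j) - x (Suc i)))"
    using Suc.IH[of "x \<circ> Suc"] by simp
  also have "\<dots> = (\<Prod>j<Suc n. \<Prod>i<j. (x j - x i))"
    by (simp add: prod.lessThan_Suc_shift prod.distrib del: prod.lessThan_Suc)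
  finally show ?case unfolding A_def .
qed

(* Replacing the monomials x^j by any polynomials p_j of degree <= j with coefficient
   1 at x^j does not change the Vandermonde determinant: the change of basis
   matrix (coeff (p j) k) is upper unitriangular. *)
lemma vandermonde_det_poly:
  fixes x :: "nat \<Rightarrow> 'a::comm_ring_1" and p :: "nat \<Rightarrow> 'a poly"
  assumes deg: "\<And>j. degree (p j) \<le> j" and monic: "\<And>j. coeff (p j) j = 1"
  shows "det (mat n n (\<lambda>(i,j). poly (p j) (x i))) = (\<Prod>j<n. \<Prod>i<j. (x j - x i))"
proof -
  define X where "X = mat n n (\<lambda>(i,j). x i ^ j)"
  define U where "U = mat n n (\<lambda>(k,j). coeff (p j) k)"
  have X: "X \<in> carrier_mat n n" and U: "U \<in> carrier_mat n n" unfolding X_def U_def by auto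
  have "mat n n (\<lambda>(i,j). poly (p j) (x i)) = X * U"
  proof (rule eq_matI)
    fix i j assume "i < dim_row (X * U)" "j < dim_col (X * U)"
    then have i: "i < n" and j: "j < n" using X U by auto
    have "(X * U) $$ (i,j) = (\<Sum>k\<in>{0..<n}. x i ^ k * coeff (p j) k)"
      using i j X U by (simp add: scalar_prod_def X_def U_def)
    also have "\<dots> = (\<Sum>k\<le>degree (p j). coeff (p j) k * x i ^ k)"
      by (rule sum.mono_neutral_cong_right) (use deg[of j] j in \<open>auto simp: coeff_eq_0\<close>)
    also have "\<dots> = poly (p j) (x i)" by (simp add: poly_altdef)
    finally show "mat n n (\<lambda>(i,j). poly (p j) (x i)) $$ (i,j) = (X * U) $$ (i,j)"
      using i j by simp
  qed (use X U in auto)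
  then have "det (mat n n (\<lambda>(i,j). poly (p j) (x i))) = det X * det U"
    using det_mult[OF X U] by simp
  moreover have "det U = 1" unfolding U_def
    by (rule det_upper_unitriangular) (use deg le_less_trans in \<open>auto intro!: coeff_eq_0 simp: monic\<close>)
  ultimately show ?thesis unfolding X_def by (simp add: vandermonde_det)
qed


section \<open>Coefficient extraction on multivariate polynomials\<close>

(* Phi is such a functional applied
   to the polynomial part of the series. *)
definition lin_ext :: "('m \<Rightarrow> 'r) \<Rightarrow> ('m \<Rightarrow>\<^sub>0 'r) \<Rightarrow> 'r::comm_semiring_1" where
  "lin_ext w p = (\<Sum>e\<in>Poly_Mapping.keys p. Poly_Mapping.lookup p e * w e)"

lemma lin_ext_superset:
  assumes "finite K" "Poly_Mapping.keys p \<subseteq> K"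
  shows "lin_ext w p = (\<Sum>e\<in>K. Poly_Mapping.lookup p e * w e)"
  unfolding lin_ext_def using assms
  by (intro sum.mono_neutral_left) (auto simp: in_keys_iff)

lemma lin_ext_add: "lin_ext w (p + q) = lin_ext w p + lin_ext w q"
proof -
  let ?K = "Poly_Mapping.keys p \<union> Poly_Mapping.keys q"
  have "lin_ext w (p + q) = (\<Sum>e\<in>?K. Poly_Mapping.lookup (p + q) e * w e)"
    by (intro lin_ext_superset Poly_Mapping.keys_add) auto
  also have "\<dots> = (\<Sum>e\<in>?K. Poly_Mapping.lookup p e * w e) + (\<Sum>e\<in>?K. Poly_Mapping.lookup q e * w e)"
    by (simp add: lookup_add distrib_right sum.distrib)
  also have "\<dots> = lin_ext w p + lin_ext w q"
    by (subst (1 2) lin_ext_superset[of ?K]) auto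
  finally show ?thesis .
qed

lemma lin_ext_sum: "lin_ext w (\<Sum>x\<in>X. f x) = (\<Sum>x\<in>X. lin_ext w (f x))"
  by (induction X rule: infinite_finite_induct) (simp_all add: lin_ext_def[of w 0] lin_ext_add)

lemma lin_ext_single: "lin_ext w (Poly_Mapping.single e c) = c * w e"
  by (simp add: lin_ext_def)

lemma lin_ext_const_mult:
  fixes p :: "('m::comm_monoid_add) \<Rightarrow>\<^sub>0 'r::comm_semiring_1"
  shows "lin_ext w (Poly_Mapping.single 0 c * p) = c * lin_ext w p"
proof -
  have lookup_cp: "Poly_Mapping.lookup (Poly_Mapping.single 0 c * p) e = c * Poly_Mapping.lookup p e" for e
    unfolding mult_map_scale_conv_mult[symmetric] by (simp add: map.rep_eq when_def)
  have "Poly_Mapping.keys (Poly_Mapping.single 0 c * p) \<subseteq> Poly_Mapping.keys p"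
    by (auto simp: in_keys_iff lookup_cp)
  then have "lin_ext w (Poly_Mapping.single 0 c * p)
           = (\<Sum>e\<in>Poly_Mapping.keys p. Poly_Mapping.lookup (Poly_Mapping.single 0 c * p) e * w e)"
    by (intro lin_ext_superset) auto
  also have "\<dots> = c * lin_ext w p"
    by (simp add: lookup_cp lin_ext_def sum_distrib_left mult.assoc)
  finally show ?thesis .
qed

lemma prod_single:
  fixes f :: "'i \<Rightarrow> 'k::comm_monoid_add" and c :: "'i \<Rightarrow> 'r::comm_semiring_1"
  shows "finite A \<Longrightarrow> (\<Prod>x\<in>A. Poly_Mapping.single (f x) (c x))
                      = Poly_Mapping.single (\<Sum>x\<in>A. f x) (\<Prod>x\<in>A. c x)"
  by (induction A rule: finite_induct) (auto simp: mult_single)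

lemma prod_sum_single_expand:
  fixes f :: "'i \<Rightarrow> 'j \<Rightarrow> 'k::comm_monoid_add" and c :: "'i \<Rightarrow> 'j \<Rightarrow> 'r::comm_semiring_1"
  assumes "finite A" "\<And>x. x \<in> A \<Longrightarrow> finite (B x)"
  shows "(\<Prod>x\<in>A. \<Sum>y\<in>B x. Poly_Mapping.single (f x y) (c x y))
     = (\<Sum>g\<in>PiE A B. Poly_Mapping.single (\<Sum>x\<in>A. f x (g x)) (\<Prod>x\<in>A. c x (g x)))"
  by (simp add: prod_sum_PiE[OF assms] prod_single[OF assms(1)])

lemma lookup_sum_single:
  fixes m :: "nat \<Rightarrow> nat"
  shows "Poly_Mapping.lookup (\<Sum>i<n. Poly_Mapping.single i (m i)) k = (if k < n then m k else 0)"
  by (simp add: lookup_sum lookup_single when_def)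

lemma uvar_power: "uvar i ^ m = Poly_Mapping.single (Poly_Mapping.single i m) 1"
  by (induction m) (simp_all add: uvar_def mult_single single_add[symmetric])


section \<open>Binomial polynomials\<close>

lemma poly_pbinom: "poly (pbinom p k) x = poly p x gchoose k"
  by (simp add: pbinom_def poly_prod gbinomial_prod_rev atLeast0LessThan field_simps)

lemma pbinom_degree_lead_coeff:
  "degree (pbinom [:c,1:] m) = m \<and> lead_coeff (pbinom [:c,1:] m) = 1 / fact m"
proof -
  have factor: "[:c,1:] - [:of_nat k:] = [:c - of_nat k, 1:]" for k by simp
  have "degree (\<Prod>k<m. [:c - of_nat k, 1:]) = m"
    by (subst degree_prod_eq_sum_degree) auto
  moreover have "lead_coeff (\<Prod>k<m. [:c - of_nat k, 1:]) = 1"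
    by (simp add: lead_coeff_prod)
  ultimately show ?thesis unfolding pbinom_def factor by (simp add: prod_zero_iff)
qed

lemma pbinom_top_coeff: "coeff (pbinom [:c,1:] m) m = 1 / fact m"
  using pbinom_degree_lead_coeff[of c m] by metis

lemma pbinom_nonzero: "pbinom [:c,1:] m \<noteq> 0"
  using pbinom_top_coeff[of c m] by auto

lemma pbinom_convolution:
  "(\<Sum>k\<le>i. of_nat (i choose k) * (if k \<le> L then pbinom [:0,1:] (L - k) else 0))
   = pbinom [:of_nat i, 1:] L"
proof -
  have "poly (\<Sum>k\<le>i. of_nat (i choose k) * (if k \<le> L then pbinom [:0,1:] (L - k) else 0)) x
      = poly (pbinom [:of_nat i, 1:] L) x" for x :: rat
  proof -
    define f where "f k = of_nat (i choose k) * (x gchoose (L - k))" for k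
    have "poly (\<Sum>k\<le>i. of_nat (i choose k) * (if k \<le> L then pbinom [:0,1:] (L - k) else 0)) x
        = (\<Sum>k\<le>i. if k \<in> {..L} then f k else 0)"
      by (simp add: poly_sum f_def poly_pbinom of_nat_poly)
         (intro sum.cong refl, auto simp: poly_pbinom f_def)
    also have "\<dots> = (\<Sum>k\<in>{..i} \<inter> {..L}. f k)"
      by (simp only: sum.inter_restrict[symmetric] finite_atMost)
    also have "\<dots> = (\<Sum>k\<in>{0..L}. f k)"
      by (rule sum.mono_neutral_left) (auto simp: f_def)
    also have "\<dots> = (\<Sum>k\<in>{0..L}. (of_nat i gchoose k) * (x gchoose (L - k)))"
      by (simp add: f_def binomial_gbinomial)
    also have "\<dots> = (of_nat i + x) gchoose L" by (rule gbinomial_Vandermonde)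
    also have "\<dots> = poly (pbinom [:of_nat i, 1:] L) x" by (simp add: poly_pbinom)
    finally show ?thesis .
  qed
  then show ?thesis using poly_eq_poly_eq_iff by blast
qed

lemma tbinom_convolution:
  assumes "1 \<le> A"
  shows "(\<Sum>k\<le>i. of_nat (i choose k) *
            (if s + k \<le> A - 1 then pbinom [:0,1:] (A - 1 - (s + k)) else 0))
       = tbinom i (int A - int s - 1)"
proof (cases "s \<le> A - 1")
  case True
  define L where "L = A - 1 - s"
  have "(\<Sum>k\<le>i. of_nat (i choose k) *
            (if s + k \<le> A - 1 then pbinom [:0,1:] (A - 1 - (s + k)) else 0))
      = (\<Sum>k\<le>i. of_nat (i choose k) * (if k \<le> L then pbinom [:0,1:] (L - k) else 0))"
    using True by (intro sum.cong refl) (auto simp: L_def)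
  also have "\<dots> = pbinom [:of_nat i, 1:] L" by (rule pbinom_convolution)
  also have "\<dots> = tbinom i (int A - int s - 1)"
    using True assms by (simp add: tbinom_def L_def nat_diff_distrib' of_nat_diff)
  finally show ?thesis .
next
  case False
  then show ?thesis using assms by (simp add: tbinom_def)
qed


section \<open>Expansion of Phi over choices of monomials\<close>

definition pairs :: "nat \<Rightarrow> (nat \<times> nat) set" where
  "pairs n = {(i,j). i < j \<and> j < n}"

lemma pairs_eq: "pairs n = (\<lambda>x. (snd x, fst x)) ` (SIGMA j:{..<n}. {..<j})"
  unfolding pairs_def by (auto simp: image_iff)

lemma finite_pairs [simp]: "finite (pairs n)"
  unfolding pairs_eq by auto

lemma inj_on_swap: "inj_on (\<lambda>x. (snd x, fst x)) A"
  by (auto simp: inj_on_def)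

lemma prod_pairs: "(\<Prod>p\<in>pairs n. h p) = (\<Prod>j<n. \<Prod>i<j. h (i,j))"
  unfolding pairs_eq prod.reindex[OF inj_on_swap] by (simp add: prod.Sigma split_def)

lemma sum_pairs: "(\<Sum>p\<in>pairs n. h p) = (\<Sum>j<n. \<Sum>i<j. h (i,j))"
  unfolding pairs_eq sum.reindex[OF inj_on_swap] by (simp add: sum.Sigma split_def)

lemma card_pairs: "card (pairs n) = (\<Sum>k<n. k)"
  using sum_pairs[of "\<lambda>_. 1::nat" n] by simp

(* A choice (s,m) of a monomial from the factor (u_j - u_i)(1 + tau u_j + u_i u_j):
   s = 0 takes u_j and s = 1 takes -u_i from the first bracket; m = 0, 1, 2 takes
   1, tau u_j, u_i u_j from the second one. *)
definition choices :: "(nat \<times> nat) set" where "choices = {0,1} \<times> {0,1,2}"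
definition top_choices :: "(nat \<times> nat) set" where "top_choices = {0,1} \<times> {0,1}"

definition choice_monomial :: "nat \<times> nat \<Rightarrow> nat \<times> nat \<Rightarrow> (nat \<Rightarrow>\<^sub>0 nat)" where
  "choice_monomial p c =
     (if fst c = 0 then Poly_Mapping.single (snd p) 1 else Poly_Mapping.single (fst p) 1)
     + (if snd c = 0 then 0 else if snd c = 1 then Poly_Mapping.single (snd p) 1
        else Poly_Mapping.single (fst p) 1 + Poly_Mapping.single (snd p) 1)"

definition choice_coeff :: "nat \<times> nat \<Rightarrow> rat poly poly" where
  "choice_coeff c = (if fst c = 0 then 1 else -1) * (if snd c = 1 then tau else 1)"

lemma factor_expand:
  "(uvar j - uvar i) * (1 + uconst tau * uvar j + uvar i * uvar j)
   = (\<Sum>c\<in>choices. Poly_Mapping.single (choice_monomial (i,j) c) (choice_coeff c))"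
  unfolding choices_def
  by (simp add: uvar_def uconst_def choice_monomial_def choice_coeff_def
      algebra_simps mult_single single_uminus)

lemma top_factor_expand:
  "(uvar j - uvar i) * (1 + uvar j)
   = (\<Sum>c\<in>top_choices. Poly_Mapping.single (choice_monomial (i,j) c) (if fst c = 0 then 1 else -1))"
  unfolding top_choices_def
  by (simp add: uvar_def choice_monomial_def algebra_simps mult_single single_uminus)

lemma lookup_choice_monomial:
  "Poly_Mapping.lookup (choice_monomial (i,j) c) k =
     (if fst c = 0 then (if k = j then 1 else 0) else (if k = i then 1 else 0))
     + (if snd c = 0 then 0 else if snd c = 1 then (if k = j then 1 else 0)
        else (if k = i then 1 else 0) + (if k = j then 1 else 0))"
  by (simp add: choice_monomial_def lookup_add lookup_single when_def)

definition choice_exp :: "nat \<Rightarrow> (nat \<times> nat \<Rightarrow> nat \<times> nat) \<Rightarrow> (nat \<Rightarrow>\<^sub>0 nat)" where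
  "choice_exp n g = (\<Sum>p\<in>pairs n. choice_monomial p (g p))"
definition choice_sign :: "nat \<Rightarrow> (nat \<times> nat \<Rightarrow> nat \<times> nat) \<Rightarrow> rat poly" where
  "choice_sign n g = (\<Prod>p\<in>pairs n. if fst (g p) = 0 then 1 else -1)"
definition num_tau :: "nat \<Rightarrow> (nat \<times> nat \<Rightarrow> nat \<times> nat) \<Rightarrow> nat" where
  "num_tau n g = (\<Sum>p\<in>pairs n. if snd (g p) = 1 then 1 else 0)"
definition num_quad :: "nat \<Rightarrow> (nat \<times> nat \<Rightarrow> nat \<times> nat) \<Rightarrow> nat" where
  "num_quad n g = (\<Sum>p\<in>pairs n. if snd (g p) = 2 then 1 else 0)"

lemma choice_coeff_const_power:
  "choice_coeff c = [:if fst c = 0 then 1 else -1:] * tau ^ (if snd c = 1 then 1 else 0)"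
  by (simp add: choice_coeff_def one_pCons)

lemma choice_coeff_prod: "(\<Prod>p\<in>pairs n. choice_coeff (g p)) = [:choice_sign n g:] * tau ^ num_tau n g"
  unfolding choice_coeff_const_power prod.distrib prod_to_poly choice_sign_def num_tau_def power_sum
  by (simp add: if_distrib[where f="\<lambda>x. [:x:]"] cong: if_cong)

lemma Qpoly_expand:
  "Qpoly n = (\<Sum>g\<in>PiE (pairs n) (\<lambda>_. choices).
     Poly_Mapping.single (choice_exp n g) ([:choice_sign n g:] * tau ^ num_tau n g))"
proof -
  have "Qpoly n = (\<Prod>p\<in>pairs n. \<Sum>c\<in>choices. Poly_Mapping.single (choice_monomial p c) (choice_coeff c))"
    unfolding Qpoly_def pairs_def by (intro prod.cong refl) (auto simp: factor_expand)
  also have "\<dots> = (\<Sum>g\<in>PiE (pairs n) (\<lambda>_. choices).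
      Poly_Mapping.single (choice_exp n g) (\<Prod>p\<in>pairs n. choice_coeff (g p)))"
    unfolding choice_exp_def by (rule prod_sum_single_expand) (auto simp: choices_def)
  finally show ?thesis by (simp only: choice_coeff_prod)
qed

lemma lookup_choice_exp_outside: "k \<ge> n \<Longrightarrow> Poly_Mapping.lookup (choice_exp n g) k = 0"
  unfolding choice_exp_def lookup_sum
  by (intro sum.neutral) (auto simp: pairs_def lookup_choice_monomial)

definition total_deg :: "nat \<Rightarrow> (nat \<Rightarrow>\<^sub>0 nat) \<Rightarrow> nat" where
  "total_deg n e = (\<Sum>k<n. Poly_Mapping.lookup e k)"

(* Every factor contributes 1 to the total degree, plus 1 for a tau u_j-choice and
   plus 2 for a u_i u_j-choice. *)
lemma total_deg_choice_exp:
  assumes g: "g \<in> PiE (pairs n) (\<lambda>_. choices)"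
  shows "total_deg n (choice_exp n g) = card (pairs n) + num_tau n g + 2 * num_quad n g"
proof -
  have "total_deg n (choice_exp n g) = (\<Sum>p\<in>pairs n. total_deg n (choice_monomial p (g p)))"
    unfolding total_deg_def choice_exp_def lookup_sum by (rule sum.swap)
  also have "\<dots> = (\<Sum>p\<in>pairs n. 1 + ((if snd (g p) = 1 then 1 else 0)
                                      + 2 * (if snd (g p) = 2 then 1 else 0)))"
  proof (intro sum.cong refl)
    fix p assume p: "p \<in> pairs n"
    then obtain i j where ij: "p = (i,j)" "i < j" "j < n" by (auto simp: pairs_def)
    have "g p \<in> choices" using PiE_mem[OF g p] .
    then show "total_deg n (choice_monomial p (g p)) = 1 + ((if snd (g p) = 1 then 1 else 0)
                                      + 2 * (if snd (g p) = 2 then 1 else 0))"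
      unfolding total_deg_def ij(1) lookup_choice_monomial using ij
      by (auto simp: choices_def sum.distrib)
  qed
  finally show ?thesis by (simp add: sum.distrib num_tau_def num_quad_def sum_distrib_left sum_Suc)
qed

(* The weight of a monomial u^e in Phi: the coefficient of the complementary
   monomial prod u_i^(a_i - 1 - e_i) in prod (1 + tau u_i)^t. *)
definition phi_weight :: "nat list \<Rightarrow> (nat \<Rightarrow>\<^sub>0 nat) \<Rightarrow> rat poly poly" where
  "phi_weight a e = (if (\<forall>i\<ge>length a. Poly_Mapping.lookup e i = 0) then
           (\<Prod>i<length a. if Poly_Mapping.lookup e i \<le> a ! i - 1
                     then ser_coeff (a ! i - 1 - Poly_Mapping.lookup e i) else 0)
         else 0)"

lemma Phi_lin_ext: "Phi a = lin_ext (phi_weight a) (Qpoly (length a))"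
  unfolding Phi_def lin_ext_def phi_weight_def Let_def by (intro sum.cong refl) auto

definition fits :: "nat list \<Rightarrow> (nat \<times> nat \<Rightarrow> nat \<times> nat) \<Rightarrow> bool" where
  "fits a g = (\<forall>k<length a. Poly_Mapping.lookup (choice_exp (length a) g) k \<le> a ! k - 1)"
definition binom_weight :: "nat list \<Rightarrow> (nat \<times> nat \<Rightarrow> nat \<times> nat) \<Rightarrow> rat poly" where
  "binom_weight a g = (\<Prod>k<length a. pbinom [:0,1:] (a ! k - 1 - Poly_Mapping.lookup (choice_exp (length a) g) k))"

lemma phi_weight_choice:
  "phi_weight a (choice_exp (length a) g) = (if fits a g then
     [:binom_weight a g:] * tau ^ (\<Sum>k<length a. a ! k - 1 - Poly_Mapping.lookup (choice_exp (length a) g) k)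
     else 0)"
  unfolding phi_weight_def fits_def binom_weight_def
  by (auto simp: lookup_choice_exp_outside ser_coeff_def prod.distrib prod_to_poly power_sum
      prod_smult intro!: prod_zero)

lemma dstat_eq:
  assumes "\<forall>k<length a. k + 1 \<le> a ! k"
  shows "dstat a = (\<Sum>k<length a. a ! k - 1) - card (pairs (length a))"
proof -
  have "(\<Sum>k<length a. a ! k - 1 - k) = (\<Sum>k<length a. a ! k - 1) - (\<Sum>k<length a. k)"
    using assms by (intro sum_subtractf_nat) auto
  moreover have "(\<Sum>k<length a. a ! k - 1 - k) = dstat a"
    unfolding dstat_def by (intro sum.cong refl) auto
  ultimately show ?thesis by (simp add: card_pairs)
qed

lemma choice_summand:
  assumes ha: "\<forall>k<length a. k + 1 \<le> a ! k" and g: "g \<in> PiE (pairs (length a)) (\<lambda>_. choices)"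
    and fit: "fits a g"
  shows "[:choice_sign (length a) g:] * tau ^ num_tau (length a) g * phi_weight a (choice_exp (length a) g)
      = monom (choice_sign (length a) g * binom_weight a g) (dstat a - 2 * num_quad (length a) g)"
    and "2 * num_quad (length a) g \<le> dstat a"
proof -
  let ?n = "length a"
  let ?e = "choice_exp ?n g"
  let ?S = "\<Sum>k<?n. a ! k - 1"
  have le: "total_deg ?n ?e \<le> ?S"
    using fit unfolding total_deg_def fits_def by (intro sum_mono) auto
  have rest: "(\<Sum>k<?n. a ! k - 1 - Poly_Mapping.lookup ?e k) = ?S - total_deg ?n ?e"
    using fit unfolding total_deg_def fits_def by (intro sum_subtractf_nat) auto
  have td: "total_deg ?n ?e = card (pairs ?n) + num_tau ?n g + 2 * num_quad ?n g"
    by (rule total_deg_choice_exp[OF g])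
  have ds: "dstat a = ?S - card (pairs ?n)" by (rule dstat_eq[OF ha])
  have expo: "num_tau ?n g + (?S - total_deg ?n ?e) = dstat a - 2 * num_quad ?n g"
    using le td ds by linarith
  show "2 * num_quad ?n g \<le> dstat a" using le td ds by linarith
  have "[:choice_sign ?n g:] * tau ^ num_tau ?n g * phi_weight a ?e
      = [:choice_sign ?n g:] * tau ^ num_tau ?n g * ([:binom_weight a g:] * tau ^ (?S - total_deg ?n ?e))"
    unfolding phi_weight_choice rest using fit by simp
  also have "\<dots> = monom (choice_sign ?n g * binom_weight a g) (num_tau ?n g + (?S - total_deg ?n ?e))"
    by (simp add: monom_altdef tau_def power_add algebra_simps)
  finally show "[:choice_sign ?n g:] * tau ^ num_tau ?n g * phi_weight a ?e
      = monom (choice_sign ?n g * binom_weight a g) (dstat a - 2 * num_quad ?n g)"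
    unfolding expo .
qed

lemma Phi_sum:
  assumes ha: "\<forall>k<length a. k + 1 \<le> a ! k"
  shows "Phi a = (\<Sum>g\<in>PiE (pairs (length a)) (\<lambda>_. choices).
     if fits a g then monom (choice_sign (length a) g * binom_weight a g) (dstat a - 2 * num_quad (length a) g)
     else 0)"
  unfolding Phi_lin_ext Qpoly_expand lin_ext_sum lin_ext_single
proof (intro sum.cong refl)
  fix g assume g: "g \<in> PiE (pairs (length a)) (\<lambda>_. choices)"
  show "[:choice_sign (length a) g:] * tau ^ num_tau (length a) g * phi_weight a (choice_exp (length a) g)
     = (if fits a g then monom (choice_sign (length a) g * binom_weight a g) (dstat a - 2 * num_quad (length a) g)
        else 0)"
    using choice_summand(1)[OF ha g] by (cases "fits a g") (simp_all add: phi_weight_choice)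
qed

lemma coeff_Phi:
  assumes ha: "\<forall>k<length a. k + 1 \<le> a ! k"
  shows "coeff (Phi a) m = (\<Sum>g\<in>PiE (pairs (length a)) (\<lambda>_. choices).
     if fits a g \<and> m = dstat a - 2 * num_quad (length a) g
     then choice_sign (length a) g * binom_weight a g else 0)"
  unfolding Phi_sum[OF ha] coeff_sum by (intro sum.cong refl) (auto simp: coeff_monom)

theorem degree_Phi_le:
  assumes "\<forall>k<length a. k + 1 \<le> a ! k"
  shows "degree (Phi a) \<le> dstat a"
  by (rule degree_le) (auto simp: coeff_Phi[OF assms] intro!: sum.neutral)


section \<open>The top coefficient is the determinant D_a\<close>

(* Only choices avoiding u_i u_j reach tau^d(a), i.e. choice functions with
   values in top_choices; top_sum a is the sum of their coefficients. *)
definition top_sum :: "nat list \<Rightarrow> rat poly" where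
  "top_sum a = (\<Sum>g\<in>PiE (pairs (length a)) (\<lambda>_. top_choices).
     if fits a g then choice_sign (length a) g * binom_weight a g else 0)"

lemma coeff_Phi_top:
  assumes ha: "\<forall>k<length a. k + 1 \<le> a ! k"
  shows "coeff (Phi a) (dstat a) = top_sum a"
proof -
  let ?n = "length a"
  let ?G = "PiE (pairs ?n) (\<lambda>_. choices)" and ?T = "PiE (pairs ?n) (\<lambda>_. top_choices)"
  let ?f = "\<lambda>g. if fits a g \<and> num_quad ?n g = 0 then choice_sign ?n g * binom_weight a g else 0"
  have num_quad_0: "num_quad ?n g = 0 \<longleftrightarrow> g \<in> ?T" if "g \<in> ?G" for g
    using that unfolding num_quad_def
    by (subst sum_eq_0_iff) (auto simp: choices_def top_choices_def PiE_iff, metis snd_conv)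
  have top_sub: "?T \<subseteq> ?G" by (rule PiE_mono) (auto simp: choices_def top_choices_def)
  have "coeff (Phi a) (dstat a) = (\<Sum>g\<in>?G. ?f g)"
    unfolding coeff_Phi[OF ha] using choice_summand(2)[OF ha]
    by (intro sum.cong refl) fastforce
  also have "\<dots> = top_sum a"
    unfolding top_sum_def
  proof (rule sum.mono_neutral_cong_right)
    show "finite ?G" by (auto simp: choices_def intro!: finite_PiE)
  qed (use top_sub num_quad_0 in \<open>auto simp: subset_iff\<close>)
  finally show ?thesis .
qed

(* top_sum a is again a coefficient extraction: the weight of phi_weight with the
   tau-powers dropped, applied to prod (u_j - u_i)(1 + u_j). *)
definition top_weight :: "nat list \<Rightarrow> (nat \<Rightarrow>\<^sub>0 nat) \<Rightarrow> rat poly poly" where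
  "top_weight a e = (if (\<forall>i\<ge>length a. Poly_Mapping.lookup e i = 0)
                        \<and> (\<forall>i<length a. Poly_Mapping.lookup e i \<le> a ! i - 1)
     then [:\<Prod>i<length a. pbinom [:0,1:] (a ! i - 1 - Poly_Mapping.lookup e i):] else 0)"

definition Qtop :: "nat \<Rightarrow> upoly" where
  "Qtop n = (\<Prod>p\<in>pairs n. (uvar (snd p) - uvar (fst p)) * (1 + uvar (snd p)))"

lemma lin_ext_Qtop: "lin_ext (top_weight a) (Qtop (length a)) = [:top_sum a:]"
proof -
  let ?n = "length a"
  have "Qtop ?n = (\<Prod>p\<in>pairs ?n. \<Sum>c\<in>top_choices.
          Poly_Mapping.single (choice_monomial p c) (if fst c = 0 then 1 else -1))"
    unfolding Qtop_def by (intro prod.cong refl) (auto simp: top_factor_expand)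
  also have "\<dots> = (\<Sum>g\<in>PiE (pairs ?n) (\<lambda>_. top_choices).
          Poly_Mapping.single (choice_exp ?n g) [:choice_sign ?n g:])"
    unfolding choice_exp_def choice_sign_def prod_to_poly[symmetric]
    by (subst prod_sum_single_expand)
       (auto simp: top_choices_def one_pCons intro!: sum.cong arg_cong[where f="Poly_Mapping.single _"] prod.cong)
  finally have "lin_ext (top_weight a) (Qtop ?n) = (\<Sum>g\<in>PiE (pairs ?n) (\<lambda>_. top_choices).
          [:choice_sign ?n g:] * top_weight a (choice_exp ?n g))"
    by (simp add: lin_ext_sum lin_ext_single)
  also have "\<dots> = (\<Sum>g\<in>PiE (pairs ?n) (\<lambda>_. top_choices).
          [:if fits a g then choice_sign ?n g * binom_weight a g else 0:])"
    by (intro sum.cong refl)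
       (auto simp: top_weight_def fits_def binom_weight_def lookup_choice_exp_outside)
  finally show ?thesis unfolding sum_to_poly top_sum_def .
qed

lemma monomial_times_binomial:
  "uvar i ^ m * (1 + uvar i) ^ i =
   (\<Sum>k\<in>{..i}. Poly_Mapping.single (Poly_Mapping.single i (m + k)) (of_nat (i choose k)))"
proof -
  have "(1 + uvar i) ^ i = (\<Sum>k\<le>i. of_nat (i choose k) * uvar i ^ k * 1 ^ (i - k))"
    using binomial_ring[of "uvar i" 1 i] by (simp add: add.commute)
  then show ?thesis
    by (simp add: sum_distrib_left uvar_power mult_single single_of_nat[symmetric]
        single_add[symmetric] del: single_of_nat)
qed

(* The weight is multiplicative over the variables, so on a product of
   one-variable polynomials u_i^(s_i) (1 + u_i)^i it factors; by the Vandermonde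
   convolution each factor is an entry binom(t + i, a_i - 1 - s_i) of D_a. *)
lemma lin_ext_top_weight_row:
  assumes ha: "\<forall>k<length a. 1 \<le> a ! k"
  shows "lin_ext (top_weight a) (\<Prod>i<length a. uvar i ^ s i * (1 + uvar i) ^ i)
     = [:\<Prod>i<length a. tbinom i (int (a ! i) - int (s i) - 1):]"
proof -
  let ?n = "length a"
  let ?I = "PiE {..<?n} (\<lambda>i. {..i})"
  define F where "F i k = of_nat (i choose k) *
     (if s i + k \<le> a ! i - 1 then pbinom [:0,1:] (a ! i - 1 - (s i + k)) else 0)" for i k
  have expand: "(\<Prod>i<?n. uvar i ^ s i * (1 + uvar i) ^ i)
     = (\<Sum>h\<in>?I. Poly_Mapping.single (\<Sum>i<?n. Poly_Mapping.single i (s i + h i))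
                                     (\<Prod>i<?n. of_nat (i choose h i)))"
    unfolding monomial_times_binomial by (rule prod_sum_single_expand) auto
  have summand: "(\<Prod>i<?n. of_nat (i choose h i)) * top_weight a (\<Sum>i<?n. Poly_Mapping.single i (s i + h i))
            = [:\<Prod>i<?n. F i (h i):]" for h
  proof (cases "\<forall>i<?n. s i + h i \<le> a ! i - 1")
    case True
    then have "(\<Prod>i<?n. F i (h i))
             = (\<Prod>i<?n. of_nat (i choose h i)) * (\<Prod>i<?n. pbinom [:0,1:] (a ! i - 1 - (s i + h i)))"
      unfolding F_def prod.distrib by (intro arg_cong2[where f="(*)"] refl prod.cong) auto
    then show ?thesis using True
      by (simp add: top_weight_def lookup_sum_single of_nat_poly[where 'a="rat poly"] prod_to_poly)
  next
    case False
    then obtain i where "i < ?n" "\<not> s i + h i \<le> a ! i - 1" by auto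
    then have "(\<Prod>i<?n. F i (h i)) = 0" unfolding F_def by (intro prod_zero) auto
    then show ?thesis using False by (auto simp: top_weight_def lookup_sum_single)
  qed
  have "lin_ext (top_weight a) (\<Prod>i<?n. uvar i ^ s i * (1 + uvar i) ^ i)
      = (\<Sum>h\<in>?I. [:\<Prod>i<?n. F i (h i):])"
    unfolding expand lin_ext_sum lin_ext_single summand ..
  also have "\<dots> = [:\<Prod>i<?n. \<Sum>k\<le>i. F i k:]"
    unfolding sum_to_poly by (subst prod_sum_PiE) auto
  also have "\<dots> = [:\<Prod>i<?n. tbinom i (int (a ! i) - int (s i) - 1):]"
    unfolding F_def using ha by (intro arg_cong[where f="\<lambda>x. [:x:]"] prod.cong refl tbinom_convolution) auto
  finally show ?thesis .
qed

(* prod (u_j - u_i)(1 + u_j) = Vandermonde(u) prod (1 + u_i)^i, expanded over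
   permutations. *)
lemma Qtop_leibniz:
  "Qtop n = (\<Sum>\<sigma>\<in>{\<sigma>. \<sigma> permutes {..<n}}. signof \<sigma> * (\<Prod>i<n. uvar i ^ \<sigma> i * (1 + uvar i) ^ i))"
proof -
  have "(\<Prod>p\<in>pairs n. uvar (snd p) - uvar (fst p)) = det (mat n n (\<lambda>(i,j). uvar i ^ j))"
    unfolding prod_pairs vandermonde_det by simp
  also have "\<dots> = (\<Sum>\<sigma>\<in>{\<sigma>. \<sigma> permutes {..<n}}. signof \<sigma> * (\<Prod>i<n. uvar i ^ \<sigma> i))"
    by (rule det_mat_leibniz)
  finally have vandermonde: "(\<Prod>p\<in>pairs n. uvar (snd p) - uvar (fst p)) = \<dots>" .
  have "(\<Prod>p\<in>pairs n. 1 + uvar (snd p)) = (\<Prod>i<n. (1 + uvar i) ^ i)"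
    unfolding prod_pairs by simp
  then show ?thesis unfolding Qtop_def prod.distrib vandermonde sum_distrib_right
    by (simp add: prod.distrib mult.assoc)
qed

theorem top_sum_det:
  assumes ha: "\<forall>k<length a. 1 \<le> a ! k"
  shows "top_sum a = det (Dmat a)"
proof -
  let ?n = "length a"
  let ?P = "{\<sigma>. \<sigma> permutes {..<?n}}"
  have "[:top_sum a:] = lin_ext (top_weight a) (Qtop ?n)" by (simp add: lin_ext_Qtop)
  also have "\<dots> = (\<Sum>\<sigma>\<in>?P. of_int (sign \<sigma>) *
                    lin_ext (top_weight a) (\<Prod>i<?n. uvar i ^ \<sigma> i * (1 + uvar i) ^ i))"
    unfolding Qtop_leibniz lin_ext_sum
    by (intro sum.cong refl) (simp add: lin_ext_const_mult single_of_int[symmetric] del: single_of_int)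
  also have "\<dots> = (\<Sum>\<sigma>\<in>?P. [:of_int (sign \<sigma>) * (\<Prod>i<?n. tbinom i (int (a ! i) - int (\<sigma> i) - 1)):])"
    by (intro sum.cong refl) (simp add: lin_ext_top_weight_row[OF ha] of_int_poly[where 'a="rat poly"])
  also have "\<dots> = [:det (Dmat a):]"
    unfolding sum_to_poly Dmat_def det_mat_leibniz by simp
  finally show ?thesis by simp
qed


section \<open>The determinant D_a does not vanish\<close>

definition falling_poly :: "nat \<Rightarrow> rat poly" where
  "falling_poly j = (\<Prod>k<j. [:- of_nat k, 1:])"

lemma falling_poly_degree: "degree (falling_poly j) = j"
  unfolding falling_poly_def by (subst degree_prod_eq_sum_degree) auto

lemma falling_poly_monic: "coeff (falling_poly j) j = 1"
proof -
  have "lead_coeff (falling_poly j) = 1" unfolding falling_poly_def by (simp add: lead_coeff_prod)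
  then show ?thesis by (simp add: falling_poly_degree)
qed

lemma poly_falling_poly: "poly (falling_poly j) (of_nat b) = fact j * of_nat (b choose j)"
  by (simp add: falling_poly_def poly_prod binomial_gbinomial gbinomial_mult_fact atLeast0LessThan)

(* The leading coefficient in t of binom(t+i, b-j) is 1/(b-j)! = top_entry b j,
   and 0 when j > b. *)
definition top_entry :: "nat \<Rightarrow> nat \<Rightarrow> rat" where
  "top_entry b j = of_nat (b choose j) * fact j / fact b"

lemma top_entry_le: "j \<le> b \<Longrightarrow> top_entry b j = 1 / fact (b - j)"
  by (simp add: top_entry_def binomial_fact field_simps)

(* A product of entries of D_a along a permutation sigma is either 0 or of degree
   exactly d(a) in t, since the degrees a_i - 1 - sigma_i add up to d(a); its
   coefficient of t^d(a) is the product of the leading coefficients. *)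
lemma coeff_prod_tbinom:
  assumes ha: "\<forall>k<length a. k + 1 \<le> a ! k" and \<sigma>: "\<sigma> permutes {..<length a}"
  shows "coeff (\<Prod>i<length a. tbinom i (int (a ! i) - int (\<sigma> i) - 1)) (dstat a)
       = (\<Prod>i<length a. top_entry (a ! i - 1) (\<sigma> i))"
proof (cases "\<forall>i<length a. \<sigma> i \<le> a ! i - 1")
  case False
  then obtain i where i: "i < length a" "\<not> \<sigma> i \<le> a ! i - 1" by auto
  have zero_prod: "(\<Prod>i<length a. tbinom i (int (a ! i) - int (\<sigma> i) - 1)) = 0"
    using i by (intro prod_zero) (auto intro!: bexI[of _ i] simp: tbinom_def)
  have zero_entries: "(\<Prod>i<length a. top_entry (a ! i - 1) (\<sigma> i)) = 0"
    using i by (intro prod_zero) (auto intro!: bexI[of _ i] simp: top_entry_def)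
  show ?thesis unfolding zero_prod zero_entries by simp
next
  case True
  let ?n = "length a"
  define m where "m i = a ! i - 1 - \<sigma> i" for i
  have "(\<Prod>i<?n. tbinom i (int (a ! i) - int (\<sigma> i) - 1)) = (\<Prod>i<?n. pbinom [:of_nat i, 1:] (m i))"
  proof (intro prod.cong refl)
    fix i assume "i \<in> {..<?n}"
    then have "int (a ! i) - int (\<sigma> i) - 1 = int (m i)" using True ha unfolding m_def by fastforce
    then show "tbinom i (int (a ! i) - int (\<sigma> i) - 1) = pbinom [:of_nat i, 1:] (m i)"
      by (simp add: tbinom_def)
  qed
  moreover have "degree (\<Prod>i<?n. pbinom [:of_nat i, 1:] (m i)) = dstat a"
  proof -
    have "degree (\<Prod>i<?n. pbinom [:of_nat i, 1:] (m i)) = (\<Sum>i<?n. m i)"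
      by (subst degree_prod_eq_sum_degree) (auto simp: pbinom_nonzero pbinom_degree_lead_coeff)
    also have "\<dots> = (\<Sum>i<?n. a ! i - 1) - (\<Sum>i<?n. \<sigma> i)"
      unfolding m_def using True by (intro sum_subtractf_nat) auto
    also have "(\<Sum>i<?n. \<sigma> i) = (\<Sum>i<?n. i)"
      using sum.permute[OF \<sigma>, of "\<lambda>i. i"] by simp
    finally show ?thesis using dstat_eq[OF ha] card_pairs by simp
  qed
  moreover have "lead_coeff (\<Prod>i<?n. pbinom [:of_nat i, 1:] (m i)) = (\<Prod>i<?n. top_entry (a ! i - 1) (\<sigma> i))"
    using True by (simp add: lead_coeff_prod pbinom_degree_lead_coeff pbinom_top_coeff top_entry_le m_def)
  ultimately show ?thesis by simp
qed

lemma coeff_det_Dmat: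
  assumes ha: "\<forall>k<length a. k + 1 \<le> a ! k"
  shows "coeff (det (Dmat a)) (dstat a)
       = det (mat (length a) (length a) (\<lambda>(i,j). top_entry (a ! i - 1) j))"
proof -
  let ?n = "length a"
  let ?P = "{\<sigma>. \<sigma> permutes {..<?n}}"
  have "coeff (det (Dmat a)) (dstat a) = (\<Sum>\<sigma>\<in>?P.
          coeff ([:signof \<sigma>:] * (\<Prod>i<?n. tbinom i (int (a ! i) - int (\<sigma> i) - 1))) (dstat a))"
    unfolding Dmat_def det_mat_leibniz coeff_sum by (simp add: of_int_poly)
  also have "\<dots> = (\<Sum>\<sigma>\<in>?P. signof \<sigma> * (\<Prod>i<?n. top_entry (a ! i - 1) (\<sigma> i)))"
    by (intro sum.cong refl) (simp add: coeff_prod_tbinom[OF ha])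
  also have "\<dots> = det (mat ?n ?n (\<lambda>(i,j). top_entry (a ! i - 1) j))"
    by (simp add: det_mat_leibniz)
  finally show ?thesis .
qed

(* With b_i = a_i - 1: det [top_entry b_i j] = prod (1/b_i!) * det [b_i^(falling j)]
   = prod (1/b_i!) * Vandermonde(b), nonzero since the b_i are distinct. *)
theorem det_Dmat_nonzero:
  assumes ha: "\<forall>k<length a. k + 1 \<le> a ! k" and dist: "distinct a"
  shows "det (Dmat a) \<noteq> 0"
proof -
  let ?n = "length a"
  define b where "b i = a ! i - 1" for i
  have entry: "top_entry (b i) j = (1 / fact (b i)) * poly (falling_poly j) (of_nat (b i))" for i j
    by (simp add: top_entry_def poly_falling_poly)
  have b_distinct: "b j \<noteq> b i" if "i < j" "j < ?n" for i j
  proof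
    assume "b j = b i"
    moreover have "i < ?n" using that by simp
    then have "a ! i \<ge> 1" "a ! j \<ge> 1" using ha that(2) by fastforce+
    ultimately have "a ! j = a ! i" unfolding b_def by simp
    then show False using dist that nth_eq_iff_index_eq by fastforce
  qed
  have "coeff (det (Dmat a)) (dstat a)
      = (\<Prod>i<?n. 1 / fact (b i)) * det (mat ?n ?n (\<lambda>(i,j). poly (falling_poly j) ((of_nat \<circ> b) i)))"
    unfolding coeff_det_Dmat[OF ha] b_def[symmetric] entry by (subst det_scale_rows) simp
  also have "\<dots> = (\<Prod>i<?n. 1 / fact (b i)) * (\<Prod>j<?n. \<Prod>i<j. (of_nat (b j) - of_nat (b i)))"
    by (simp add: vandermonde_det_poly falling_poly_degree falling_poly_monic)
  also have "\<dots> \<noteq> 0" using b_distinct by (auto simp: prod_zero_iff)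
  finally show ?thesis by auto
qed


theorem Phi_degree_top_coeff:
  assumes ha: "\<forall>k<length a. k + 1 \<le> a ! k" and dist: "distinct a"
  shows "degree (Phi a) = dstat a \<and> coeff (Phi a) (dstat a) = det (Dmat a)"
proof -
  have "\<forall>k<length a. 1 \<le> a ! k" using ha by auto
  then have top: "coeff (Phi a) (dstat a) = det (Dmat a)"
    using coeff_Phi_top[OF ha] top_sum_det by simp
  then have "dstat a \<le> degree (Phi a)"
    using det_Dmat_nonzero[OF ha dist] le_degree by metis
  with degree_Phi_le[OF ha] top show ?thesis by simp
qed

lemma sorted_distinct_pos_bound:
  fixes xs :: "nat list"
  assumes "sorted xs" "distinct xs" "0 \<notin> set xs"
  shows "\<forall>k<length xs. k + 1 \<le> xs ! k"
proof (intro allI impI)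
  fix k assume "k < length xs"
  then show "k + 1 \<le> xs ! k"
  proof (induction k)
    case 0 then show ?case using nth_mem[OF 0] assms(3) by (cases "xs ! 0") auto
  next
    case (Suc k)
    have "xs ! k < xs ! Suc k"
      using sorted_wrt_nth_less[of "(<)" xs k "Suc k"] assms(1,2) Suc.prems
      by (simp add: strict_sorted_iff)
    then show ?case using Suc by simp
  qed
qed

theorem mainTheorem10:
  fixes n :: nat and M :: "(nat \<times> nat) set"
  assumes "noncrossing_matching n M"
  shows "degree (Phi (matching_seq M)) = dstat (matching_seq M)
    \<and> coeff (Phi (matching_seq M)) (dstat (matching_seq M)) = det (Dmat (matching_seq M))"
proof -
  have arches: "fst ` M \<subseteq> {1..2*n}" using assms unfolding noncrossing_matching_def by auto
  then have "finite (fst ` M)" using finite_subset by blast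
  then have "set (matching_seq M) = fst ` M" unfolding matching_seq_def by simp
  then have "0 \<notin> set (matching_seq M)" using arches by auto
  moreover have "sorted (matching_seq M)" "distinct (matching_seq M)"
    unfolding matching_seq_def by auto
  ultimately show ?thesis
    by (intro Phi_degree_top_coeff sorted_distinct_pos_bound) auto
qed

end
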